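(* Let $X$ be a real reflexive Banach space and $T:X\rightrightarrows X^{\ast}$ maximally monotone. Then for every $h\in\mathcal{H}(T)$, $\epsilon\ge0$ and $x\in X$, $\breve{T}_h(\epsilon,x)\subset T^{\mathrm{BE}}(\epsilon,x)$; in particular $\breve{T}_{\mathcal{F}_T}(\epsilon,x)\subset T^{\mathrm{BE}}(\epsilon,x)$.
   Context: $X^{\ast}$ is the dual of $X$ with pairing $\langle\cdot,\cdot\rangle$. The dual of $X\times X^{\ast}$ is identified with $X^{\ast}\times X$ via $\langle (x,x^{\ast}),(y^{\ast},y)\rangle=\langle x,y^{\ast}\rangle+\langle y,x^{\ast}\rangle$. $\mathcal{H}(T)$ is the family of lower semicontinuous convex $h:X\times X^{\ast}\to\mathbb{R}\cup\{+\infty\}$ with $h(x,x^{\ast})\ge\langle x,x^{\ast}\rangle$ everywhere and equality whenever $x^{\ast}\in T(x)$. For $\eta\ge0$, $\partial_\eta h(z)$ is the set of $(y^{\ast},y)\in X^{\ast}\times X$ with $h(w,w^{\ast})\ge h(z)+\langle (w,w^{\ast})-z,(y^{\ast},y)\rangle-\eta$ for all $(w,w^{\ast})$ when $h(z)<\infty$, and $\emptyset$ otherwise. $\breve{T}_h(\epsilon,x):=\{x^{\ast}:(x^{\ast},x)\in\partial_{2\epsilon}h(x,x^{\ast})\}$. The Fitzpatrick function is $\mathcal{F}_T(x,x^{\ast})=\sup\{\langle y,x^{\ast}\rangle+\langle x-y,y^{\ast}\rangle:(y,y^{\ast})\in\mathrm{gph}(T)\}$ (it belongs to $\mathcal{H}(T)$).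 $T^{\mathrm{BE}}(\epsilon,x):=\{x^{\ast}: \langle y-x,y^{\ast}-x^{\ast}\rangle\ge-\epsilon\ \forall (y,y^{\ast})\in\mathrm{gph}(T)\}$. *)

theory Defs
  imports "HOL-Analysis.Analysis" "HOL-Library.Extended_Real"
begin

text \<open>X is modelled as a real Banach space 'a::banach; its dual X* is the space of
 bounded linear functionals 'a \<Rightarrow>L real with the norm topology. The pairing
 of x and x* is blinfun_apply x* x.\<close>

definition pair :: "'a::real_normed_vector \<Rightarrow> ('a \<Rightarrow>\<^sub>L real) \<Rightarrow> real" where
  "pair x xs = blinfun_apply xs x"

definition reflexive_space :: "'a::real_normed_vector itself \<Rightarrow> bool" where
  "reflexive_space TYPE('a) \<longleftrightarrow>
     (\<forall>\<phi> :: ('a \<Rightarrow>\<^sub>L real) \<Rightarrow>\<^sub>L real. \<exists>x::'a. \<forall>f. blinfun_apply \<phi> f = blinfun_apply f x)"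

definition graph :: "('a \<Rightarrow> 'b set) \<Rightarrow> ('a \<times> 'b) set" where
  "graph T = {(x, xs). xs \<in> T x}"

definition monotone_op :: "('a::real_normed_vector \<Rightarrow> ('a \<Rightarrow>\<^sub>L real) set) \<Rightarrow> bool" where
  "monotone_op T \<longleftrightarrow>
     (\<forall>x xs y ys. xs \<in> T x \<longrightarrow> ys \<in> T y \<longrightarrow> pair (x - y) (xs - ys) \<ge> 0)"

definition maximal_monotone :: "('a::real_normed_vector \<Rightarrow> ('a \<Rightarrow>\<^sub>L real) set) \<Rightarrow> bool" where
  "maximal_monotone T \<longleftrightarrow> monotone_op T \<and>
     (\<forall>S. monotone_op S \<and> graph T \<subseteq> graph S \<longrightarrow> graph S = graph T)"

definition econvex :: "('v::real_vector \<Rightarrow> ereal) \<Rightarrow> bool" where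
  "econvex h \<longleftrightarrow> (\<forall>z w t. 0 < t \<and> t < 1 \<longrightarrow>
       h ((1 - t) *\<^sub>R z + t *\<^sub>R w) \<le> ereal (1 - t) * h z + ereal t * h w)"

definition elsc :: "('v::topological_space \<Rightarrow> ereal) \<Rightarrow> bool" where
  "elsc h \<longleftrightarrow> (\<forall>z c. c < h z \<longrightarrow> (\<forall>\<^sub>F w in nhds z. c < h w))"

definition HT :: "('a::real_normed_vector \<Rightarrow> ('a \<Rightarrow>\<^sub>L real) set)
                 \<Rightarrow> ('a \<times> ('a \<Rightarrow>\<^sub>L real) \<Rightarrow> ereal) set" where
  "HT T = {h. (\<forall>z. h z \<noteq> -\<infinity>) \<and> econvex h \<and> elsc h \<and>
              (\<forall>x xs. h (x, xs) \<ge> ereal (pair x xs)) \<and>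
              (\<forall>x xs. xs \<in> T x \<longrightarrow> h (x, xs) = ereal (pair x xs))}"

text \<open>Pairing of X \<times> X* with its dual X* \<times> X.\<close>
definition ppair :: "'a::real_normed_vector \<times> ('a \<Rightarrow>\<^sub>L real) \<Rightarrow> ('a \<Rightarrow>\<^sub>L real) \<times> 'a \<Rightarrow> real" where
  "ppair z u = pair (fst z) (fst u) + pair (snd u) (snd z)"

definition esubdiff :: "real \<Rightarrow> ('a::real_normed_vector \<times> ('a \<Rightarrow>\<^sub>L real) \<Rightarrow> ereal)
                        \<Rightarrow> 'a \<times> ('a \<Rightarrow>\<^sub>L real) \<Rightarrow> (('a \<Rightarrow>\<^sub>L real) \<times> 'a) set" where
  "esubdiff \<eta> h z = (if h z < \<infinity> then
      {u. \<forall>w. h w \<ge> h z + ereal (ppair (w - z) u - \<eta>)} else {})"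

definition Tbreve :: "('a::real_normed_vector \<times> ('a \<Rightarrow>\<^sub>L real) \<Rightarrow> ereal)
                      \<Rightarrow> real \<Rightarrow> 'a \<Rightarrow> ('a \<Rightarrow>\<^sub>L real) set" where
  "Tbreve h \<epsilon> x = {xs. (xs, x) \<in> esubdiff (2 * \<epsilon>) h (x, xs)}"

definition Fitzpatrick :: "('a::real_normed_vector \<Rightarrow> ('a \<Rightarrow>\<^sub>L real) set)
                           \<Rightarrow> 'a \<times> ('a \<Rightarrow>\<^sub>L real) \<Rightarrow> ereal" where
  "Fitzpatrick T z = (SUP p \<in> graph T. ereal (pair (fst p) (snd z) + pair (fst z - fst p) (snd p)))"

definition TBE :: "('a::real_normed_vector \<Rightarrow> ('a \<Rightarrow>\<^sub>L real) set) \<Rightarrow> real \<Rightarrow> 'a \<Rightarrow> ('a \<Rightarrow>\<^sub>L real) set" where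
  "TBE T \<epsilon> x = {xs. \<forall>y ys. ys \<in> T y \<longrightarrow> pair (y - x) (ys - xs) \<ge> - \<epsilon>}"

end

theory Submission
  imports Defs
begin

text \<open>Write \<open>d = \<langle>y - x, y* - x*\<rangle>\<close> for \<open>x* \<in> T\<^sub>h(\<epsilon>, x)\<close> and \<open>y* \<in> T y\<close>, and
 \<open>a = h(x, x*) - \<langle>x, x*\<rangle> \<ge> 0\<close>. The \<open>2\<epsilon>\<close>-subgradient inequality tested at \<open>(y, y*)\<close>,
 where \<open>h\<close> equals the pairing, gives \<open>d \<ge> a - 2\<epsilon>\<close>. Along the segment from \<open>(x, x*)\<close>
 to \<open>(y, y*)\<close> the pairing is a quadratic with defect \<open>t(1 - t) d\<close> against the chord,
 so convexity of \<open>h\<close> and \<open>h \<ge> \<langle>\<cdot>,\<cdot>\<rangle>\<close> give \<open>a + t d \<ge> 0\<close> for \<open>t < 1\<close>, hence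
 \<open>d \<ge> -a\<close>. Adding, \<open>d \<ge> -\<epsilon>\<close>. For the Fitzpatrick function the same conclusion follows
 directly from its definition as a supremum over the graph, using only monotonicity.\<close>

lemma pair_simps:
  "pair (a + b) f = pair a f + pair b f"
  "pair (a - b) f = pair a f - pair b f"
  "pair (c *\<^sub>R a) f = c * pair a f"
  "pair a (f + g) = pair a f + pair a g"
  "pair a (f - g) = pair a f - pair a g"
  "pair a (c *\<^sub>R f) = c * pair a f"
  by (simp_all add: pair_def blinfun.add_right blinfun.diff_right blinfun.scaleR_right
      plus_blinfun.rep_eq minus_blinfun.rep_eq scaleR_blinfun.rep_eq)

lemma pair_segment:
  "pair ((1 - t) *\<^sub>R x + t *\<^sub>R y) ((1 - t) *\<^sub>R xs + t *\<^sub>R ys)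
     = (1 - t) * pair x xs + t * pair y ys - t * (1 - t) * pair (y - x) (ys - xs)"
  by (simp add: pair_simps algebra_simps)

lemma econvex_above_pairing_gap:
  fixes h :: "'a::real_normed_vector \<times> ('a \<Rightarrow>\<^sub>L real) \<Rightarrow> ereal"
  assumes cvx: "econvex h"
    and above: "\<And>x xs. ereal (pair x xs) \<le> h (x, xs)"
    and hx: "h (x, xs) = ereal c"
    and hy: "h (y, ys) = ereal (pair y ys)"
  shows "pair x xs - c \<le> pair (y - x) (ys - xs)"
proof -
  define a where "a = c - pair x xs"
  define d where "d = pair (y - x) (ys - xs)"
  have a_nonneg: "0 \<le> a"
    using above[of x xs] hx by (simp add: a_def)
  have along_segment: "0 \<le> a + t * d" if t: "0 < t" "t < 1" for t
  proof -
    have "ereal (pair ((1 - t) *\<^sub>R x + t *\<^sub>R y) ((1 - t) *\<^sub>R xs + t *\<^sub>R ys))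
          \<le> h ((1 - t) *\<^sub>R (x, xs) + t *\<^sub>R (y, ys))"
      using above by simp
    also have "\<dots> \<le> ereal (1 - t) * h (x, xs) + ereal t * h (y, ys)"
      using cvx t unfolding econvex_def by blast
    finally have "(1 - t) * pair x xs + t * pair y ys - t * (1 - t) * d
                  \<le> (1 - t) * c + t * pair y ys"
      by (simp add: hx hy pair_segment d_def)
    hence "0 \<le> (1 - t) * (a + t * d)"
      by (simp add: a_def algebra_simps)
    thus ?thesis
      using t by (simp add: zero_le_mult_iff)
  qed
  have "- d \<le> a"
  proof (cases "d < 0")
    case True
    show ?thesis
    proof (rule dense_le_bounded[of 0])
      fix w assume "0 < w" "w < - d"
      with True along_segment[of "- w / d"] show "w \<le> a"
        by (simp add: field_simps)
    qed (use True in simp)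
  qed (use a_nonneg in simp)
  thus ?thesis
    by (simp add: a_def d_def)
qed

lemma Tbreve_subgradient:
  assumes "xs \<in> Tbreve h \<epsilon> x"
  shows "h (x, xs) < \<infinity>"
    and "h (x, xs) + ereal (pair (y - x) xs + pair x (ys - xs) - 2 * \<epsilon>) \<le> h (y, ys)"
  using assms unfolding Tbreve_def esubdiff_def
  by (auto simp: ppair_def split: if_splits)

lemma Tbreve_subset_TBE:
  assumes "h \<in> HT T"
  shows "Tbreve h \<epsilon> x \<subseteq> TBE T \<epsilon> x"
proof (unfold TBE_def, safe)
  fix xs y ys
  assume xs: "xs \<in> Tbreve h \<epsilon> x" and ys: "ys \<in> T y"
  have finite: "h (x, xs) \<noteq> -\<infinity>" and above: "\<And>x xs. ereal (pair x xs) \<le> h (x, xs)"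
    and cvx: "econvex h" and hy: "h (y, ys) = ereal (pair y ys)"
    using assms ys unfolding HT_def by auto
  obtain c where hx: "h (x, xs) = ereal c"
    using Tbreve_subgradient(1)[OF xs] finite by (cases "h (x, xs)") auto
  have "c + (pair (y - x) xs + pair x (ys - xs) - 2 * \<epsilon>) \<le> pair y ys"
    using Tbreve_subgradient(2)[OF xs, of y ys] hx hy by simp
  hence "c - pair x xs - 2 * \<epsilon> \<le> pair (y - x) (ys - xs)"
    by (simp add: pair_simps)
  moreover have "pair x xs - c \<le> pair (y - x) (ys - xs)"
    using econvex_above_pairing_gap[OF cvx above hx hy] .
  ultimately show "- \<epsilon> \<le> pair (y - x) (ys - xs)"
    by linarith
qed

lemma Fitzpatrick_le_pair:
  assumes "monotone_op T" and "ys \<in> T y"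
  shows "Fitzpatrick T (y, ys) \<le> ereal (pair y ys)"
  unfolding Fitzpatrick_def
proof (rule SUP_least)
  fix p assume "p \<in> graph T"
  hence "0 \<le> pair (y - fst p) (ys - snd p)"
    using assms unfolding monotone_op_def graph_def by auto
  thus "ereal (pair (fst p) (snd (y, ys)) + pair (fst (y, ys) - fst p) (snd p)) \<le> ereal (pair y ys)"
    by (simp add: pair_simps)
qed

lemma Fitzpatrick_ge:
  assumes "ys \<in> T y"
  shows "ereal (pair y xs + pair (x - y) ys) \<le> Fitzpatrick T (x, xs)"
  unfolding Fitzpatrick_def using assms by (force simp: graph_def intro: SUP_upper2)

lemma Tbreve_Fitzpatrick_subset_TBE:
  assumes "monotone_op T"
  shows "Tbreve (Fitzpatrick T) \<epsilon> x \<subseteq> TBE T \<epsilon> x"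
proof (unfold TBE_def, safe)
  fix xs y ys
  assume xs: "xs \<in> Tbreve (Fitzpatrick T) \<epsilon> x" and ys: "ys \<in> T y"
  have "ereal (pair y xs + pair (x - y) ys) + ereal (pair (y - x) xs + pair x (ys - xs) - 2 * \<epsilon>)
        \<le> Fitzpatrick T (x, xs) + ereal (pair (y - x) xs + pair x (ys - xs) - 2 * \<epsilon>)"
    using Fitzpatrick_ge[where T = T, OF ys] by (rule add_right_mono)
  also have "\<dots> \<le> Fitzpatrick T (y, ys)"
    using Tbreve_subgradient(2)[OF xs] .
  also have "\<dots> \<le> ereal (pair y ys)"
    using Fitzpatrick_le_pair[OF assms ys] .
  finally show "- \<epsilon> \<le> pair (y - x) (ys - xs)"
    by (simp add: pair_simps)
qed

theorem corollary3p3: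
  fixes T :: "'a::banach \<Rightarrow> ('a \<Rightarrow>\<^sub>L real) set"
  assumes "reflexive_space TYPE('a)"
    and "maximal_monotone T"
  shows "(\<forall>h \<in> HT T. \<forall>\<epsilon> \<ge> 0. \<forall>x. Tbreve h \<epsilon> x \<subseteq> TBE T \<epsilon> x)
         \<and> (\<forall>\<epsilon> \<ge> 0. \<forall>x. Tbreve (Fitzpatrick T) \<epsilon> x \<subseteq> TBE T \<epsilon> x)"
proof -
  have "monotone_op T"
    using assms(2) unfolding maximal_monotone_def by blast
  thus ?thesis
    using Tbreve_subset_TBE Tbreve_Fitzpatrick_subset_TBE by blast
qed

end
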